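(* Assume the setting in the context, with a decomposition of $\mathcal X$ over $A$, a cost function $g\in\mathcal G_s$, a fixed $\alpha\in(0,1)$, and assume moreover that $A$ is invertible. Then the following are equivalent: (a) $\mathcal R(B)=\bigoplus_{i\in\mathcal I}\big[\mathcal R(B)\cap\mathcal X_i\big]$; (b) $\{(A,B|_{\mathcal E_i},g,T)\}_{i\in\mathcal I}$ is a decomposition of $(A,B,g,T)$ for every integer $T>0$; (c) $\{(A,B|_{\mathcal E_i},g,\alpha)\}_{i\in\mathcal I}$ is a decomposition of $(A,B,g,\alpha)$.
   Context: Let $\mathcal F$ be a field and $\mathcal X,\mathcal U$ finite-dimensional vector spaces over $\mathcal F$. Let $A:\mathcal X\to\mathcal X$ and $B:\mathcal U\to\mathcal X$ be linear maps with $B$ injective; $\mathcal R(B)$ is the range of $B$. Consider the system $x_{t+1}=Ax_t+Bu_t$ and a cost $g:\mathcal X\to\mathbb R_{\ge 0}$ with $g(x)=0\iff x=0$. Standing assumption: all minima appearing below are attained. Finite-horizon problem $(A,B,g,T)$ ($T>0$ integer): policies $\pi(x_0)=(\pi_t(x_0))_{t=0}^{T-1}\in\mathcal U^T$, cost $J(x_0,\pi)=\sum_{t=0}^T g(x_t)$ with $x_{t+1}=Ax_t+B\pi_t(x_0)$. Infinite-horizon problem $(A,B,g,\alpha)$ ($\alpha\in(0,1)$): policies $\pi(x_0)\in\mathcal U^{\mathbb Z_+}$, cost $J(x_0,\pi)=\sum_{t\ge0}\alpha^tg(x_t)$. In both, $J^*(x_0)=\min_\pi J(x_0,\pi)$ and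 a minimizing policy is optimal at $x_0$. In the infinite-horizon case $J^*$ satisfies $J^*(x)=g(x)+\alpha\min_{u}J^*(Ax+Bu)$. A decomposition of $\mathcal X$ over $A$ is a direct sum $\mathcal X=\mathcal X_1\oplus\cdots\oplus\mathcal X_r$ with $r>1$ and $A\mathcal X_i\subseteq\mathcal X_i$, $i\in\mathcal I=\{1,\dots,r\}$; $\rho_i:\mathcal X\to\mathcal X_i$ is the projection along the other summands. $\mathcal G_s$ is the set of $h:\mathcal X\to\mathbb R_{\ge0}$ with $h(x)=\sum_i h(\rho_i(x))$ for all $x$. $\mathcal E_i=\{u\in\mathcal U:Bu\in\mathcal X_i\}$. Subproblems $(A,B|_{\mathcal E_i},g,T)$ and $(A,B|_{\mathcal E_i},g,\alpha)$: the same problems for the system $x_{i,t+1}=Ax_{i,t}+B\bar u_{i,t}$ with states in $\mathcal X_i$ and inputs in $\mathcal E_i$; optimal costs $\bar J_i^*$, optimal policies $\bar\pi_i^*$. Definition 1: the family of subproblems is a decomposition of the original problem if for every $x\in\mathcal X$: $J^*(x)=\sum_i\bar J_i^*(\rho_i(x))$, and for every choice of optimal policies $\bar\pi_i^*(\rho_i(x))$ there exists an optimal policy $\pi^*(x)$ of the original problem with $\pi^*(x)=\sum_i\bar\pi_i^*(\rho_i(x))$ (componentwise sum). *)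

theory Defs
  imports Complex_Main "HOL-Library.Extended_Nonnegative_Real"
begin

definition direct_decomp :: "('f::field \<Rightarrow> 'x::ab_group_add \<Rightarrow> 'x) \<Rightarrow> nat set \<Rightarrow> (nat \<Rightarrow> 'x set) \<Rightarrow> bool" where
  "direct_decomp sX I Xs \<longleftrightarrow>
     (\<forall>i\<in>I. module.subspace sX (Xs i)) \<and>
     (\<forall>x. \<exists>!v. (\<forall>i\<in>I. v i \<in> Xs i) \<and> (\<forall>i. i \<notin> I \<longrightarrow> v i = 0) \<and> x = (\<Sum>i\<in>I. v i))"

definition proj :: "nat set \<Rightarrow> (nat \<Rightarrow> 'x::ab_group_add set) \<Rightarrow> nat \<Rightarrow> 'x \<Rightarrow> 'x" where
  "proj I Xs i x = (THE v. (\<forall>j\<in>I. v j \<in> Xs j) \<and> (\<forall>j. j \<notin> I \<longrightarrow> v j = 0) \<and> x = (\<Sum>j\<in>I. v j)) i"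

primrec traj :: "('x \<Rightarrow> 'x) \<Rightarrow> ('u \<Rightarrow> 'x) \<Rightarrow> 'x \<Rightarrow> (nat \<Rightarrow> 'u) \<Rightarrow> nat \<Rightarrow> 'x::plus" where
  "traj A B x0 u 0 = x0"
| "traj A B x0 u (Suc t) = A (traj A B x0 u t) + B (u t)"

text \<open>Finite-horizon cost  sum_{t=0}^T g(x_t); only u 0, ..., u (T-1) matter.\<close>
definition Jfin :: "('x::plus \<Rightarrow> 'x) \<Rightarrow> ('u \<Rightarrow> 'x) \<Rightarrow> ('x \<Rightarrow> real) \<Rightarrow> nat \<Rightarrow> 'x \<Rightarrow> (nat \<Rightarrow> 'u) \<Rightarrow> real" where
  "Jfin A B g T x0 u = (\<Sum>t\<le>T. g (traj A B x0 u t))"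

definition Jinf :: "('x::plus \<Rightarrow> 'x) \<Rightarrow> ('u \<Rightarrow> 'x) \<Rightarrow> ('x \<Rightarrow> real) \<Rightarrow> real \<Rightarrow> 'x \<Rightarrow> (nat \<Rightarrow> 'u) \<Rightarrow> ennreal" where
  "Jinf A B g \<alpha> x0 u = (\<Sum>t. ennreal (\<alpha> ^ t * g (traj A B x0 u t)))"

definition is_opt :: "(nat \<Rightarrow> 'u) set \<Rightarrow> ((nat \<Rightarrow> 'u) \<Rightarrow> 'c::linorder) \<Rightarrow> (nat \<Rightarrow> 'u) \<Rightarrow> bool" where
  "is_opt S J u \<longleftrightarrow> u \<in> S \<and> (\<forall>v\<in>S. J u \<le> J v)"

text \<open>Optimal cost J^* (a minimum, by the standing attainment assumption).\<close>
definition opt_val :: "(nat \<Rightarrow> 'u) set \<Rightarrow> ((nat \<Rightarrow> 'u) \<Rightarrow> 'c::conditionally_complete_linorder) \<Rightarrow> 'c" where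
  "opt_val S J = Inf (J ` S)"

text \<open>Admissible inputs: finite horizon policies in U^T (values after T irrelevant),
  resp. infinite sequences, with values in the input set E.\<close>
definition adm_fin :: "nat \<Rightarrow> 'u set \<Rightarrow> (nat \<Rightarrow> 'u) set" where
  "adm_fin T E = {u. \<forall>t<T. u t \<in> E}"

definition adm_inf :: "'u set \<Rightarrow> (nat \<Rightarrow> 'u) set" where
  "adm_inf E = {u. \<forall>t. u t \<in> E}"

definition Eset :: "('u \<Rightarrow> 'x) \<Rightarrow> 'x set \<Rightarrow> 'u set" where
  "Eset B Xi = {u. B u \<in> Xi}"

definition decomp_fin :: "nat set \<Rightarrow> (nat \<Rightarrow> 'x::ab_group_add set) \<Rightarrow> ('x \<Rightarrow> 'x) \<Rightarrow> ('u::ab_group_add \<Rightarrow> 'x) \<Rightarrow> ('x \<Rightarrow> real) \<Rightarrow> nat \<Rightarrow> bool" where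
  "decomp_fin I Xs A B g T \<longleftrightarrow>
     (\<forall>x. opt_val (adm_fin T UNIV) (Jfin A B g T x)
            = (\<Sum>i\<in>I. opt_val (adm_fin T (Eset B (Xs i))) (Jfin A B g T (proj I Xs i x)))
        \<and> (\<forall>us. (\<forall>i\<in>I. is_opt (adm_fin T (Eset B (Xs i))) (Jfin A B g T (proj I Xs i x)) (us i))
               \<longrightarrow> is_opt (adm_fin T UNIV) (Jfin A B g T x) (\<lambda>t. \<Sum>i\<in>I. us i t)))"

definition decomp_inf :: "nat set \<Rightarrow> (nat \<Rightarrow> 'x::ab_group_add set) \<Rightarrow> ('x \<Rightarrow> 'x) \<Rightarrow> ('u::ab_group_add \<Rightarrow> 'x) \<Rightarrow> ('x \<Rightarrow> real) \<Rightarrow> real \<Rightarrow> bool" where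
  "decomp_inf I Xs A B g \<alpha> \<longleftrightarrow>
     (\<forall>x. opt_val (adm_inf UNIV) (Jinf A B g \<alpha> x)
            = (\<Sum>i\<in>I. opt_val (adm_inf (Eset B (Xs i))) (Jinf A B g \<alpha> (proj I Xs i x)))
        \<and> (\<forall>us. (\<forall>i\<in>I. is_opt (adm_inf (Eset B (Xs i))) (Jinf A B g \<alpha> (proj I Xs i x)) (us i))
               \<longrightarrow> is_opt (adm_inf UNIV) (Jinf A B g \<alpha> x) (\<lambda>t. \<Sum>i\<in>I. us i t)))"

end

theory Submission
  imports Defs
begin

(* Forward direction, (a) => (b),(c).  Condition (a) says exactly that every input image B u
   splits as a sum of input images B u_i lying in the summands X_i.  A trajectory driven by such
   split inputs projects onto X_i as the trajectory of the i-th subproblem, so by separability of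
   g its cost is the sum of the subproblem costs.  An abstract lemma about minimising an additive
   cost (decomposition_of_additive_cost) then turns this into Definition 1, uniformly for the
   finite and the discounted infinite horizon.

   Reverse direction, (b) or (c) => (a).  Given u, start at x0 = A^-1(-B u): the input "u, then 0"
   reaches 0 after one step, so every optimal input also reaches 0 at time 1 (otherwise it pays an
   extra positive stage cost).  Applied to the sum of optimal subproblem inputs, which is optimal
   by Definition 1, this writes B u as a sum of images B u_i in the X_i. *)

lemma proj_spec:
  assumes dec: "direct_decomp sX I Xs"
  shows "(\<forall>i\<in>I. proj I Xs i x \<in> Xs i) \<and> (\<forall>i. i \<notin> I \<longrightarrow> proj I Xs i x = 0)
         \<and> x = (\<Sum>i\<in>I. proj I Xs i x)"
proof -
  let ?P = "\<lambda>v. (\<forall>j\<in>I. v j \<in> Xs j) \<and> (\<forall>j. j \<notin> I \<longrightarrow> v j = 0) \<and> x = (\<Sum>j\<in>I. v j)"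
  have "\<exists>!v. ?P v" using dec unfolding direct_decomp_def by blast
  then have "?P (THE v. ?P v)" by (rule theI')
  then show ?thesis unfolding proj_def by simp
qed

lemma proj_unique:
  assumes dec: "direct_decomp sX I Xs"
    and v: "\<forall>j\<in>I. v j \<in> Xs j" "\<forall>j. j \<notin> I \<longrightarrow> v j = 0" "x = (\<Sum>j\<in>I. v j)"
  shows "proj I Xs i x = v i"
proof -
  let ?P = "\<lambda>v. (\<forall>j\<in>I. v j \<in> Xs j) \<and> (\<forall>j. j \<notin> I \<longrightarrow> v j = 0) \<and> x = (\<Sum>j\<in>I. v j)"
  have "\<exists>!v. ?P v" using dec unfolding direct_decomp_def by blast
  then have "(THE v. ?P v) = v" by (rule the1_equality) (use v in blast)
  then show ?thesis unfolding proj_def by simp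
qed

lemma proj_sum:
  assumes dec: "direct_decomp sX I Xs" and w: "\<forall>j\<in>I. w j \<in> Xs j" and i: "i \<in> I"
  shows "proj I Xs i (\<Sum>j\<in>I. w j) = w i"
proof -
  have "proj I Xs i (\<Sum>j\<in>I. w j) = (\<lambda>j. if j \<in> I then w j else 0) i"
    by (rule proj_unique[OF dec]) (use w in auto)
  then show ?thesis using i by simp
qed

section \<open>Minimising an additive cost\<close>

text \<open>This covers the finite and the infinite horizon alike.\<close>
lemma decomposition_of_additive_cost:
  fixes J0 :: "(nat \<Rightarrow> 'u::comm_monoid_add) \<Rightarrow> 'c::{ordered_comm_monoid_add, conditionally_complete_linorder}"
  assumes combine: "\<And>us. \<forall>i\<in>I. us i \<in> S i \<Longrightarrow>
                      (\<lambda>t. \<Sum>i\<in>I. us i t) \<in> S0 \<and> J0 (\<lambda>t. \<Sum>i\<in>I. us i t) = (\<Sum>i\<in>I. J i (us i))"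
    and split: "\<And>v. v \<in> S0 \<Longrightarrow> \<exists>us. (\<forall>i\<in>I. us i \<in> S i) \<and> J0 v = (\<Sum>i\<in>I. J i (us i))"
    and att: "\<forall>i\<in>I. \<exists>u. is_opt (S i) (J i) u"
  shows "opt_val S0 J0 = (\<Sum>i\<in>I. opt_val (S i) (J i))
         \<and> (\<forall>us. (\<forall>i\<in>I. is_opt (S i) (J i) (us i)) \<longrightarrow> is_opt S0 J0 (\<lambda>t. \<Sum>i\<in>I. us i t))"
proof -
  have opt_val_eq: "opt_val S J = J u" if "is_opt S J u"
    for S and J :: "(nat \<Rightarrow> 'u) \<Rightarrow> 'c" and u
    using that unfolding is_opt_def opt_val_def by (intro cInf_eq_minimum) auto
  have sum_optimal: "is_opt S0 J0 (\<lambda>t. \<Sum>i\<in>I. us i t)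
                     \<and> opt_val S0 J0 = (\<Sum>i\<in>I. opt_val (S i) (J i))"
    if opt: "\<forall>i\<in>I. is_opt (S i) (J i) (us i)" for us
  proof -
    have adm: "\<forall>i\<in>I. us i \<in> S i" using opt unfolding is_opt_def by blast
    have "J0 (\<lambda>t. \<Sum>i\<in>I. us i t) \<le> J0 v" if "v \<in> S0" for v
    proof -
      obtain vs where vs: "\<forall>i\<in>I. vs i \<in> S i" "J0 v = (\<Sum>i\<in>I. J i (vs i))"
        using split[OF \<open>v \<in> S0\<close>] by blast
      have "(\<Sum>i\<in>I. J i (us i)) \<le> (\<Sum>i\<in>I. J i (vs i))"
        using opt vs(1) unfolding is_opt_def by (intro sum_mono) blast
      then show ?thesis using combine[OF adm] vs(2) by simp
    qed
    then have is_opt: "is_opt S0 J0 (\<lambda>t. \<Sum>i\<in>I. us i t)"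
      using combine[OF adm] unfolding is_opt_def by blast
    have "opt_val S0 J0 = (\<Sum>i\<in>I. J i (us i))"
      using opt_val_eq[OF is_opt] combine[OF adm] by simp
    also have "\<dots> = (\<Sum>i\<in>I. opt_val (S i) (J i))"
      using opt opt_val_eq by (intro sum.cong refl) metis
    finally show ?thesis using is_opt by blast
  qed
  obtain us0 where "\<forall>i\<in>I. is_opt (S i) (J i) (us0 i)" using bchoice[OF att] by blast
  then show ?thesis using sum_optimal by blast
qed

lemma optimal_components:
  assumes dec: "direct_decomp sX I Xs"
    and att: "\<forall>i\<in>I. \<forall>x\<in>Xs i. \<exists>u. is_opt (S i) (J i x) u"
  shows "\<forall>i\<in>I. \<exists>u. is_opt (S i) (J i (proj I Xs i x)) u"
  using att proj_spec[OF dec, of x] by blast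

definition input_split :: "('u \<Rightarrow> 'x::comm_monoid_add) \<Rightarrow> nat set \<Rightarrow> (nat \<Rightarrow> 'x set) \<Rightarrow> 'u \<Rightarrow> (nat \<Rightarrow> 'u) \<Rightarrow> bool"
  where "input_split B I Xs w ws \<longleftrightarrow> (\<forall>i\<in>I. B (ws i) \<in> Xs i) \<and> B w = (\<Sum>i\<in>I. B (ws i))"

definition inputs_decompose :: "('u \<Rightarrow> 'x::comm_monoid_add) \<Rightarrow> nat set \<Rightarrow> (nat \<Rightarrow> 'x set) \<Rightarrow> bool"
  where "inputs_decompose B I Xs \<longleftrightarrow> (\<forall>w. \<exists>ws. input_split B I Xs w ws)"

lemma range_decomposes_iff:
  assumes hom_B: "module_hom sU sX B"
  shows "range B = {(\<Sum>i\<in>I. v i) | v. \<forall>i\<in>I. v i \<in> range B \<inter> Xs i}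
         \<longleftrightarrow> inputs_decompose B I Xs"
proof -
  have sum_in_range: "{(\<Sum>i\<in>I. v i) | v. \<forall>i\<in>I. v i \<in> range B \<inter> Xs i} \<subseteq> range B"
  proof
    fix y assume "y \<in> {(\<Sum>i\<in>I. v i) | v. \<forall>i\<in>I. v i \<in> range B \<inter> Xs i}"
    then obtain v where v: "y = (\<Sum>i\<in>I. v i)" "\<forall>i\<in>I. \<exists>a. v i = B a" by blast
    obtain a where a: "\<forall>i\<in>I. v i = B (a i)" using bchoice[OF v(2)] by blast
    have "y = B (\<Sum>i\<in>I. a i)"
      using v(1) a module_hom.sum[OF hom_B, of a I] by simp
    then show "y \<in> range B" by simp
  qed
  have "range B \<subseteq> {(\<Sum>i\<in>I. v i) | v. \<forall>i\<in>I. v i \<in> range B \<inter> Xs i}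
        \<longleftrightarrow> inputs_decompose B I Xs"
  proof
    assume sub: "range B \<subseteq> {(\<Sum>i\<in>I. v i) | v. \<forall>i\<in>I. v i \<in> range B \<inter> Xs i}"
    show "inputs_decompose B I Xs" unfolding inputs_decompose_def
    proof
      fix w
      have "B w \<in> {(\<Sum>i\<in>I. v i) | v. \<forall>i\<in>I. v i \<in> range B \<inter> Xs i}" using sub by blast
      then obtain v where v: "B w = (\<Sum>i\<in>I. v i)" "\<forall>i\<in>I. v i \<in> range B \<inter> Xs i"
        by blast
      have "\<forall>i\<in>I. \<exists>a. v i = B a" using v(2) by blast
      then obtain ws where ws: "\<forall>i\<in>I. v i = B (ws i)" by (rule bchoice[THEN exE])
      have "B w = (\<Sum>i\<in>I. B (ws i))" using v(1) ws by (auto intro: sum.cong)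
      then have "input_split B I Xs w ws"
        unfolding input_split_def using v(2) ws by auto
      then show "\<exists>ws. input_split B I Xs w ws" by blast
    qed
  next
    assume dec_inputs: "inputs_decompose B I Xs"
    show "range B \<subseteq> {(\<Sum>i\<in>I. v i) | v. \<forall>i\<in>I. v i \<in> range B \<inter> Xs i}"
    proof
      fix y assume "y \<in> range B"
      then obtain w where y: "y = B w" by blast
      obtain ws where "input_split B I Xs w ws"
        using dec_inputs unfolding inputs_decompose_def by blast
      then have "y = (\<Sum>i\<in>I. B (ws i))" "\<forall>i\<in>I. B (ws i) \<in> range B \<inter> Xs i"
        unfolding input_split_def y by auto
      then show "y \<in> {(\<Sum>i\<in>I. v i) | v. \<forall>i\<in>I. v i \<in> range B \<inter> Xs i}"
        by (intro CollectI exI[of _ "\<lambda>i. B (ws i)"]) simp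
    qed
  qed
  then show ?thesis using sum_in_range by blast
qed

lemma split_sequence:
  assumes "inputs_decompose B I Xs"
  shows "\<exists>us. \<forall>t. input_split B I Xs (v t) (\<lambda>i. us i t)"
proof -
  have "\<forall>t. \<exists>ws. input_split B I Xs (v t) ws"
    using assms unfolding inputs_decompose_def by blast
  from choice[OF this] obtain F where F: "\<forall>t. input_split B I Xs (v t) (F t)" by blast
  then show ?thesis by (intro exI[of _ "\<lambda>i t. F t i"]) simp
qed

section \<open>Invariant decompositions and separable costs\<close>

locale separable_problem =
  fixes sX :: "'f::field \<Rightarrow> 'x::ab_group_add \<Rightarrow> 'x" and sU :: "'f \<Rightarrow> 'u::ab_group_add \<Rightarrow> 'u"
    and I :: "nat set" and Xs :: "nat \<Rightarrow> 'x set"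
    and A :: "'x \<Rightarrow> 'x" and B :: "'u \<Rightarrow> 'x" and g :: "'x \<Rightarrow> real"
  assumes module_X: "module sX"
    and dec: "direct_decomp sX I Xs"
    and hom_A: "module_hom sX sX A"
    and hom_B: "module_hom sU sX B"
    and invariant: "\<forall>i\<in>I. A ` Xs i \<subseteq> Xs i"
    and g_nonneg: "\<forall>x. g x \<ge> 0"
    and g_sep: "\<forall>x. g x = (\<Sum>i\<in>I. g (proj I Xs i x))"
begin

lemma proj_add: "proj I Xs i (x + y) = proj I Xs i x + proj I Xs i y"
proof (rule proj_unique[OF dec])
  have "\<forall>j\<in>I. module.subspace sX (Xs j)" using dec unfolding direct_decomp_def by blast
  then show "\<forall>j\<in>I. proj I Xs j x + proj I Xs j y \<in> Xs j"
    using proj_spec[OF dec] module.subspace_add[OF module_X] by blast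
  show "\<forall>j. j \<notin> I \<longrightarrow> proj I Xs j x + proj I Xs j y = 0"
    using proj_spec[OF dec] by simp
  show "x + y = (\<Sum>j\<in>I. proj I Xs j x + proj I Xs j y)"
    using proj_spec[OF dec, of x] proj_spec[OF dec, of y] by (simp add: sum.distrib)
qed

text \<open>Invariance of the summands makes A commute with the projections.\<close>
lemma proj_A: "proj I Xs i (A x) = A (proj I Xs i x)"
proof (rule proj_unique[OF dec])
  show "\<forall>j\<in>I. A (proj I Xs j x) \<in> Xs j" using invariant proj_spec[OF dec] by blast
  show "\<forall>j. j \<notin> I \<longrightarrow> A (proj I Xs j x) = 0"
    using proj_spec[OF dec] module_hom.zero[OF hom_A] by simp
  have "A x = A (\<Sum>j\<in>I. proj I Xs j x)" using proj_spec[OF dec, of x] by simp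
  then show "A x = (\<Sum>j\<in>I. A (proj I Xs j x))" by (simp add: module_hom.sum[OF hom_A])
qed

lemma input_split_sum:
  assumes "\<forall>i\<in>I. B (ws i) \<in> Xs i"
  shows "input_split B I Xs (\<Sum>i\<in>I. ws i) ws"
  using assms module_hom.sum[OF hom_B] unfolding input_split_def by blast

lemma traj_proj:
  assumes "\<forall>s<n. input_split B I Xs (W s) (\<lambda>i. us i s)" and i: "i \<in> I"
  shows "proj I Xs i (traj A B x W n) = traj A B (proj I Xs i x) (us i) n"
  using assms(1)
proof (induction n)
  case 0
  then show ?case by simp
next
  case (Suc n)
  then have IH: "proj I Xs i (traj A B x W n) = traj A B (proj I Xs i x) (us i) n"
    and split: "input_split B I Xs (W n) (\<lambda>i. us i n)" by simp_all
  have "proj I Xs i (B (W n)) = B (us i n)"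
    using split proj_sum[OF dec _ i, of "\<lambda>j. B (us j n)"] unfolding input_split_def by simp
  then show ?case using IH by (simp add: proj_add proj_A)
qed

lemma stage_cost_split:
  assumes "\<forall>s<t. input_split B I Xs (W s) (\<lambda>i. us i s)"
  shows "g (traj A B x W t) = (\<Sum>i\<in>I. g (traj A B (proj I Xs i x) (us i) t))"
proof -
  have "g (traj A B x W t) = (\<Sum>i\<in>I. g (proj I Xs i (traj A B x W t)))" using g_sep by blast
  also have "\<dots> = (\<Sum>i\<in>I. g (traj A B (proj I Xs i x) (us i) t))"
    using traj_proj[OF assms] by simp
  finally show ?thesis .
qed

lemma Jfin_split:
  assumes "\<forall>s<T. input_split B I Xs (W s) (\<lambda>i. us i s)"
  shows "Jfin A B g T x W = (\<Sum>i\<in>I. Jfin A B g T (proj I Xs i x) (us i))"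
proof -
  have "Jfin A B g T x W = (\<Sum>t\<le>T. \<Sum>i\<in>I. g (traj A B (proj I Xs i x) (us i) t))"
    unfolding Jfin_def using assms by (intro sum.cong refl stage_cost_split) auto
  then show ?thesis unfolding Jfin_def by (simp add: sum.swap[of _ "{..T}"])
qed

lemma Jinf_split:
  assumes "\<forall>s. input_split B I Xs (W s) (\<lambda>i. us i s)" and "\<alpha> \<ge> 0"
  shows "Jinf A B g \<alpha> x W = (\<Sum>i\<in>I. Jinf A B g \<alpha> (proj I Xs i x) (us i))"
proof -
  have "ennreal (\<alpha> ^ t * g (traj A B x W t))
        = (\<Sum>i\<in>I. ennreal (\<alpha> ^ t * g (traj A B (proj I Xs i x) (us i) t)))" for t
    using stage_cost_split[of t W us x] assms g_nonneg
    by (simp add: sum_distrib_left sum_ennreal)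
  then show ?thesis unfolding Jinf_def by (simp add: suminf_sum)
qed

lemma decomp_fin_of_inputs_decompose:
  assumes split: "inputs_decompose B I Xs"
    and att: "\<forall>i\<in>I. \<forall>x\<in>Xs i. \<exists>u. is_opt (adm_fin T (Eset B (Xs i))) (Jfin A B g T x) u"
  shows "decomp_fin I Xs A B g T"
  unfolding decomp_fin_def
proof
  fix x
  show "opt_val (adm_fin T UNIV) (Jfin A B g T x)
          = (\<Sum>i\<in>I. opt_val (adm_fin T (Eset B (Xs i))) (Jfin A B g T (proj I Xs i x)))
        \<and> (\<forall>us. (\<forall>i\<in>I. is_opt (adm_fin T (Eset B (Xs i))) (Jfin A B g T (proj I Xs i x)) (us i))
               \<longrightarrow> is_opt (adm_fin T UNIV) (Jfin A B g T x) (\<lambda>t. \<Sum>i\<in>I. us i t))"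
  proof (rule decomposition_of_additive_cost)
    fix us :: "nat \<Rightarrow> nat \<Rightarrow> 'u" assume "\<forall>i\<in>I. us i \<in> adm_fin T (Eset B (Xs i))"
    then have "\<forall>s<T. input_split B I Xs (\<Sum>i\<in>I. us i s) (\<lambda>i. us i s)"
      unfolding adm_fin_def Eset_def by (auto intro: input_split_sum)
    then show "(\<lambda>t. \<Sum>i\<in>I. us i t) \<in> adm_fin T UNIV
               \<and> Jfin A B g T x (\<lambda>t. \<Sum>i\<in>I. us i t) = (\<Sum>i\<in>I. Jfin A B g T (proj I Xs i x) (us i))"
      by (simp add: adm_fin_def Jfin_split)
  next
    fix v :: "nat \<Rightarrow> 'u"
    obtain us where us: "\<forall>t. input_split B I Xs (v t) (\<lambda>i. us i t)"
      using split_sequence[OF split] by blast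
    then have "\<forall>i\<in>I. us i \<in> adm_fin T (Eset B (Xs i))"
      unfolding input_split_def adm_fin_def Eset_def by blast
    then show "\<exists>us. (\<forall>i\<in>I. us i \<in> adm_fin T (Eset B (Xs i)))
                    \<and> Jfin A B g T x v = (\<Sum>i\<in>I. Jfin A B g T (proj I Xs i x) (us i))"
      using us by (intro exI[of _ us]) (simp add: Jfin_split)
  next
    show "\<forall>i\<in>I. \<exists>u. is_opt (adm_fin T (Eset B (Xs i))) (Jfin A B g T (proj I Xs i x)) u"
      by (rule optimal_components[OF dec att])
  qed
qed

lemma decomp_inf_of_inputs_decompose:
  assumes split: "inputs_decompose B I Xs" and alpha: "\<alpha> \<ge> 0"
    and att: "\<forall>i\<in>I. \<forall>x\<in>Xs i. \<exists>u. is_opt (adm_inf (Eset B (Xs i))) (Jinf A B g \<alpha> x) u"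
  shows "decomp_inf I Xs A B g \<alpha>"
  unfolding decomp_inf_def
proof
  fix x
  show "opt_val (adm_inf UNIV) (Jinf A B g \<alpha> x)
          = (\<Sum>i\<in>I. opt_val (adm_inf (Eset B (Xs i))) (Jinf A B g \<alpha> (proj I Xs i x)))
        \<and> (\<forall>us. (\<forall>i\<in>I. is_opt (adm_inf (Eset B (Xs i))) (Jinf A B g \<alpha> (proj I Xs i x)) (us i))
               \<longrightarrow> is_opt (adm_inf UNIV) (Jinf A B g \<alpha> x) (\<lambda>t. \<Sum>i\<in>I. us i t))"
  proof (rule decomposition_of_additive_cost)
    fix us :: "nat \<Rightarrow> nat \<Rightarrow> 'u" assume "\<forall>i\<in>I. us i \<in> adm_inf (Eset B (Xs i))"
    then have "\<forall>s. input_split B I Xs (\<Sum>i\<in>I. us i s) (\<lambda>i. us i s)"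
      unfolding adm_inf_def Eset_def by (auto intro: input_split_sum)
    then show "(\<lambda>t. \<Sum>i\<in>I. us i t) \<in> adm_inf UNIV
               \<and> Jinf A B g \<alpha> x (\<lambda>t. \<Sum>i\<in>I. us i t) = (\<Sum>i\<in>I. Jinf A B g \<alpha> (proj I Xs i x) (us i))"
      using alpha by (simp add: adm_inf_def Jinf_split)
  next
    fix v :: "nat \<Rightarrow> 'u"
    obtain us where us: "\<forall>t. input_split B I Xs (v t) (\<lambda>i. us i t)"
      using split_sequence[OF split] by blast
    then have "\<forall>i\<in>I. us i \<in> adm_inf (Eset B (Xs i))"
      unfolding input_split_def adm_inf_def Eset_def by blast
    then show "\<exists>us. (\<forall>i\<in>I. us i \<in> adm_inf (Eset B (Xs i)))
                    \<and> Jinf A B g \<alpha> x v = (\<Sum>i\<in>I. Jinf A B g \<alpha> (proj I Xs i x) (us i))"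
      using us alpha by (intro exI[of _ us]) (simp add: Jinf_split)
  next
    show "\<forall>i\<in>I. \<exists>u. is_opt (adm_inf (Eset B (Xs i))) (Jinf A B g \<alpha> (proj I Xs i x)) u"
      by (rule optimal_components[OF dec att])
  qed
qed

end

section \<open>Necessity of condition (a)\<close>

lemma traj_reset:
  assumes hom_A: "module_hom sX sX A" and hom_B: "module_hom sU sX B" and x0: "A x0 = - B u"
  shows "traj A B x0 (\<lambda>t. if t = 0 then u else 0) (Suc t) = 0"
  by (induction t) (use x0 module_hom.zero[OF hom_A] module_hom.zero[OF hom_B] in simp_all)

text \<open>Consequently an optimal finite-horizon input from x0 must also be at 0 at time 1:
  the reset input costs only g x0, and any other value at time 1 costs strictly more.\<close>
lemma fin_optimal_reaches_zero:
  assumes hom_A: "module_hom sX sX A" and hom_B: "module_hom sU sX B" and x0: "A x0 = - B u"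
    and g_nonneg: "\<forall>x. g x \<ge> 0" and g_zero: "\<forall>x. g x = 0 \<longleftrightarrow> x = 0" and T: "T > 0"
    and opt: "is_opt (adm_fin T UNIV) (Jfin A B g T x0) W"
  shows "traj A B x0 W 1 = 0"
proof -
  let ?reset = "\<lambda>t. if t = 0 then u else 0"
  obtain T' where T': "T = Suc T'" using T by (cases T) auto
  have shift: "Jfin A B g T x0 v = g x0 + (\<Sum>t\<le>T'. g (traj A B x0 v (Suc t)))" for v
    unfolding Jfin_def T' by (simp only: sum.atMost_Suc_shift traj.simps(1))
  have "g x0 + g (traj A B x0 W 1) \<le> Jfin A B g T x0 W"
    using shift[of W] member_le_sum[of 0 "{..T'}" "\<lambda>t. g (traj A B x0 W (Suc t))"] g_nonneg
    by simp
  also have "\<dots> \<le> Jfin A B g T x0 ?reset"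
    using opt unfolding is_opt_def adm_fin_def by simp
  also have "\<dots> = g x0"
    using shift[of ?reset] traj_reset[OF hom_A hom_B x0] g_zero by simp
  finally show ?thesis using g_nonneg g_zero by (meson add_le_same_cancel1 order_antisym)
qed

lemma inf_optimal_reaches_zero:
  assumes hom_A: "module_hom sX sX A" and hom_B: "module_hom sU sX B" and x0: "A x0 = - B u"
    and g_nonneg: "\<forall>x. g x \<ge> 0" and g_zero: "\<forall>x. g x = 0 \<longleftrightarrow> x = 0" and alpha: "\<alpha> > 0"
    and opt: "is_opt (adm_inf UNIV) (Jinf A B g \<alpha> x0) W"
  shows "traj A B x0 W 1 = 0"
proof -
  let ?reset = "\<lambda>t. if t = 0 then u else 0"
  have reset_cost: "Jinf A B g \<alpha> x0 ?reset = ennreal (g x0)"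
  proof -
    have "ennreal (\<alpha> ^ n * g (traj A B x0 ?reset n)) = 0" if n: "n \<notin> {0}" for n
    proof -
      obtain m where "n = Suc m" using n by (cases n) auto
      then have "traj A B x0 ?reset n = 0" using traj_reset[OF hom_A hom_B x0, of m] by (simp only:)
      then show ?thesis using g_zero[rule_format, of 0] by simp
    qed
    then have "Jinf A B g \<alpha> x0 ?reset = (\<Sum>t\<in>{0}. ennreal (\<alpha> ^ t * g (traj A B x0 ?reset t)))"
      unfolding Jinf_def by (intro suminf_finite) auto
    then show ?thesis by simp
  qed
  have "ennreal (g x0 + \<alpha> * g (traj A B x0 W 1))
        = (\<Sum>t\<in>{0,1}. ennreal (\<alpha> ^ t * g (traj A B x0 W t)))"
    using g_nonneg alpha by (simp add: ennreal_plus)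
  also have "\<dots> \<le> Jinf A B g \<alpha> x0 W"
    unfolding Jinf_def by (rule sum_le_suminf) auto
  also have "\<dots> \<le> Jinf A B g \<alpha> x0 ?reset"
    using opt unfolding is_opt_def adm_inf_def by simp
  finally have "\<alpha> * g (traj A B x0 W 1) \<le> 0"
    using reset_cost g_nonneg by (simp add: ennreal_le_iff)
  then have "g (traj A B x0 W 1) \<le> 0" using alpha by (simp add: mult_le_0_iff)
  then show ?thesis using g_nonneg g_zero by (meson order_antisym)
qed

lemma input_split_of_reaching_zero:
  assumes hom_B: "module_hom sU sX B" and x0: "A x0 = - B u"
    and zero: "traj A B x0 (\<lambda>t. \<Sum>i\<in>I. us i t) 1 = 0"
    and comps: "\<forall>i\<in>I. B (us i 0) \<in> Xs i"
  shows "input_split B I Xs u (\<lambda>i. us i 0)"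
proof -
  have "- B u + B (\<Sum>i\<in>I. us i 0) = 0" using zero x0 by simp
  then have "B u = B (\<Sum>i\<in>I. us i 0)" by (simp add: add.commute eq_neg_iff_add_eq_0)
  then show ?thesis using comps module_hom.sum[OF hom_B] unfolding input_split_def by simp
qed

lemma inputs_decompose_of_decomp_fin:
  assumes dec: "direct_decomp sX I Xs"
    and hom_A: "module_hom sX sX A" and hom_B: "module_hom sU sX B" and surj_A: "surj A"
    and g_nonneg: "\<forall>x. g x \<ge> 0" and g_zero: "\<forall>x. g x = 0 \<longleftrightarrow> x = 0" and T: "T > 0"
    and D: "decomp_fin I Xs A B g T"
    and att: "\<forall>i\<in>I. \<forall>x\<in>Xs i. \<exists>u. is_opt (adm_fin T (Eset B (Xs i))) (Jfin A B g T x) u"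
  shows "inputs_decompose B I Xs"
  unfolding inputs_decompose_def
proof
  fix u
  obtain x0 where x0: "A x0 = - B u" using surj_A by (metis surjD)
  obtain us where us: "\<forall>i\<in>I. is_opt (adm_fin T (Eset B (Xs i))) (Jfin A B g T (proj I Xs i x0)) (us i)"
    using bchoice[OF optimal_components[OF dec att]] by blast
  then have "is_opt (adm_fin T UNIV) (Jfin A B g T x0) (\<lambda>t. \<Sum>i\<in>I. us i t)"
    using D unfolding decomp_fin_def by blast
  then have "traj A B x0 (\<lambda>t. \<Sum>i\<in>I. us i t) 1 = 0"
    by (rule fin_optimal_reaches_zero[OF hom_A hom_B x0 g_nonneg g_zero T])
  moreover have "\<forall>i\<in>I. B (us i 0) \<in> Xs i"
    using us T unfolding is_opt_def adm_fin_def Eset_def by blast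
  ultimately show "\<exists>ws. input_split B I Xs u ws"
    using input_split_of_reaching_zero[where A = A, OF hom_B x0] by blast
qed

lemma inputs_decompose_of_decomp_inf:
  assumes dec: "direct_decomp sX I Xs"
    and hom_A: "module_hom sX sX A" and hom_B: "module_hom sU sX B" and surj_A: "surj A"
    and g_nonneg: "\<forall>x. g x \<ge> 0" and g_zero: "\<forall>x. g x = 0 \<longleftrightarrow> x = 0" and alpha: "\<alpha> > 0"
    and D: "decomp_inf I Xs A B g \<alpha>"
    and att: "\<forall>i\<in>I. \<forall>x\<in>Xs i. \<exists>u. is_opt (adm_inf (Eset B (Xs i))) (Jinf A B g \<alpha> x) u"
  shows "inputs_decompose B I Xs"
  unfolding inputs_decompose_def
proof
  fix u
  obtain x0 where x0: "A x0 = - B u" using surj_A by (metis surjD)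
  obtain us where us: "\<forall>i\<in>I. is_opt (adm_inf (Eset B (Xs i))) (Jinf A B g \<alpha> (proj I Xs i x0)) (us i)"
    using bchoice[OF optimal_components[OF dec att]] by blast
  then have "is_opt (adm_inf UNIV) (Jinf A B g \<alpha> x0) (\<lambda>t. \<Sum>i\<in>I. us i t)"
    using D unfolding decomp_inf_def by blast
  then have "traj A B x0 (\<lambda>t. \<Sum>i\<in>I. us i t) 1 = 0"
    by (rule inf_optimal_reaches_zero[OF hom_A hom_B x0 g_nonneg g_zero alpha])
  moreover have "\<forall>i\<in>I. B (us i 0) \<in> Xs i"
    using us unfolding is_opt_def adm_inf_def Eset_def by blast
  ultimately show "\<exists>ws. input_split B I Xs u ws"
    using input_split_of_reaching_zero[where A = A, OF hom_B x0] by blast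
qed

theorem theorem2:
  fixes sX :: "'f::field \<Rightarrow> 'x::ab_group_add \<Rightarrow> 'x"
    and sU :: "'f \<Rightarrow> 'u::ab_group_add \<Rightarrow> 'u"
    and BasX :: "'x set" and BasU :: "'u set"
    and A :: "'x \<Rightarrow> 'x" and B :: "'u \<Rightarrow> 'x"
    and r :: nat and Xs :: "nat \<Rightarrow> 'x set"
    and g :: "'x \<Rightarrow> real" and \<alpha> :: real
  assumes fdX: "finite_dimensional_vector_space sX BasX"
    and fdU: "finite_dimensional_vector_space sU BasU"
    and linA: "Vector_Spaces.linear sX sX A"
    and linB: "Vector_Spaces.linear sU sX B"
    and injB: "inj B"
    and invA: "bij A"
    and r_gt: "r > 1"
    and dec: "direct_decomp sX {1..r} Xs"
    and inv: "\<forall>i\<in>{1..r}. A ` Xs i \<subseteq> Xs i"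
    and g_nonneg: "\<forall>x. g x \<ge> 0"
    and g_zero: "\<forall>x. g x = 0 \<longleftrightarrow> x = 0"
    and g_sep: "\<forall>x. g x = (\<Sum>i\<in>{1..r}. g (proj {1..r} Xs i x))"
    and alpha: "0 < \<alpha>" "\<alpha> < 1"
    and att_fin: "\<forall>T>0. \<forall>x. \<exists>u. is_opt (adm_fin T UNIV) (Jfin A B g T x) u"
    and att_fin_sub: "\<forall>T>0. \<forall>i\<in>{1..r}. \<forall>x\<in>Xs i.
                        \<exists>u. is_opt (adm_fin T (Eset B (Xs i))) (Jfin A B g T x) u"
    and att_inf: "\<forall>x. \<exists>u. is_opt (adm_inf UNIV) (Jinf A B g \<alpha> x) u"
    and att_inf_sub: "\<forall>i\<in>{1..r}. \<forall>x\<in>Xs i.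
                        \<exists>u. is_opt (adm_inf (Eset B (Xs i))) (Jinf A B g \<alpha> x) u"
  shows "(range B = {(\<Sum>i\<in>{1..r}. v i) | v. \<forall>i\<in>{1..r}. v i \<in> range B \<inter> Xs i}
            \<longleftrightarrow> (\<forall>T>0. decomp_fin {1..r} Xs A B g T))
       \<and> ((\<forall>T>0. decomp_fin {1..r} Xs A B g T) \<longleftrightarrow> decomp_inf {1..r} Xs A B g \<alpha>)"
proof -
  have hom_A: "module_hom sX sX A" and hom_B: "module_hom sU sX B"
    using linA linB by (simp_all add: linear_iff_module_hom)
  have module_X: "module sX"
    using fdX finite_dimensional_vector_space.axioms(1) module_iff_vector_space by blast
  interpret separable_problem sX sU "{1..r}" Xs A B g
    unfolding separable_problem_def using module_X dec hom_A hom_B inv g_nonneg g_sep by blast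
  have surj_A: "surj A" using invA by (rule bij_is_surj)
  note necessity_fin = inputs_decompose_of_decomp_fin[OF dec hom_A hom_B surj_A g_nonneg g_zero]
  note necessity_inf = inputs_decompose_of_decomp_inf[OF dec hom_A hom_B surj_A g_nonneg g_zero]
  have a_iff_b: "inputs_decompose B {1..r} Xs \<longleftrightarrow> (\<forall>T>0. decomp_fin {1..r} Xs A B g T)"
  proof (intro iffI allI impI)
    fix T :: nat assume "inputs_decompose B {1..r} Xs" and "T > 0"
    then show "decomp_fin {1..r} Xs A B g T"
      using att_fin_sub decomp_fin_of_inputs_decompose by blast
  next
    assume "\<forall>T>0. decomp_fin {1..r} Xs A B g T"
    then show "inputs_decompose B {1..r} Xs"
      using necessity_fin[of 1] att_fin_sub by simp
  qed
  have a_iff_c: "inputs_decompose B {1..r} Xs \<longleftrightarrow> decomp_inf {1..r} Xs A B g \<alpha>"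
    using decomp_inf_of_inputs_decompose[OF _ less_imp_le[OF alpha(1)] att_inf_sub]
      necessity_inf[OF alpha(1) _ att_inf_sub] by blast
  show ?thesis
    using trans[OF range_decomposes_iff[OF hom_B] a_iff_b] trans[OF a_iff_b[symmetric] a_iff_c]
    by (rule conjI)
qed

end
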